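(* Let $G$ and $H$ be graphs each having at least one edge. Then the join of $G$ and $H$ is well-bicovered if and only if each of $G$ and $H$ is both well-covered and well-bicovered, and $b(G)=b(H)=2\alpha(G)=2\alpha(H)$.
   Context: All graphs are finite and simple; "subgraph" means induced subgraph. $b(G)$ denotes the maximum order of an induced bipartite subgraph of $G$. A graph is well-bicovered if every vertex-inclusion-maximal induced bipartite subgraph has the same order (namely $b(G)$). A graph is well-covered if every maximal independent set has the same cardinality, namely the independence number $\alpha(G)$. The join of $G$ and $H$ is the disjoint union of $G$ and $H$ together with all edges between $V(G)$ and $V(H)$. *)

theory Defs
  imports Main
begin

definition graph :: "'a set \<Rightarrow> ('a \<Rightarrow> 'a \<Rightarrow> bool) \<Rightarrow> bool" where
  "graph V E \<longleftrightarrow> finite V \<and> (\<forall>x y. E x y \<longrightarrow> x \<in> V \<and> y \<in> V)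
     \<and> (\<forall>x y. E x y \<longrightarrow> E y x) \<and> (\<forall>x. \<not> E x x)"

definition has_edge :: "('a \<Rightarrow> 'a \<Rightarrow> bool) \<Rightarrow> bool" where
  "has_edge E \<longleftrightarrow> (\<exists>x y. E x y)"

definition independent :: "'a set \<Rightarrow> ('a \<Rightarrow> 'a \<Rightarrow> bool) \<Rightarrow> 'a set \<Rightarrow> bool" where
  "independent V E S \<longleftrightarrow> S \<subseteq> V \<and> (\<forall>x\<in>S. \<forall>y\<in>S. \<not> E x y)"

definition bipartite_set :: "'a set \<Rightarrow> ('a \<Rightarrow> 'a \<Rightarrow> bool) \<Rightarrow> 'a set \<Rightarrow> bool" where
  "bipartite_set V E S \<longleftrightarrow> S \<subseteq> V \<and>
     (\<exists>A B. A \<union> B = S \<and> A \<inter> B = {} \<and> independent V E A \<and> independent V E B)"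

definition maximal_independent :: "'a set \<Rightarrow> ('a \<Rightarrow> 'a \<Rightarrow> bool) \<Rightarrow> 'a set \<Rightarrow> bool" where
  "maximal_independent V E S \<longleftrightarrow> independent V E S \<and>
     (\<forall>T. independent V E T \<and> S \<subseteq> T \<longrightarrow> T = S)"

definition maximal_bipartite_set :: "'a set \<Rightarrow> ('a \<Rightarrow> 'a \<Rightarrow> bool) \<Rightarrow> 'a set \<Rightarrow> bool" where
  "maximal_bipartite_set V E S \<longleftrightarrow> bipartite_set V E S \<and>
     (\<forall>T. bipartite_set V E T \<and> S \<subseteq> T \<longrightarrow> T = S)"

definition alpha :: "'a set \<Rightarrow> ('a \<Rightarrow> 'a \<Rightarrow> bool) \<Rightarrow> nat" where
  "alpha V E = Max (card ` {S. independent V E S})"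

definition bnum :: "'a set \<Rightarrow> ('a \<Rightarrow> 'a \<Rightarrow> bool) \<Rightarrow> nat" where
  "bnum V E = Max (card ` {S. bipartite_set V E S})"

definition well_covered :: "'a set \<Rightarrow> ('a \<Rightarrow> 'a \<Rightarrow> bool) \<Rightarrow> bool" where
  "well_covered V E \<longleftrightarrow> (\<forall>S. maximal_independent V E S \<longrightarrow> card S = alpha V E)"

definition well_bicovered :: "'a set \<Rightarrow> ('a \<Rightarrow> 'a \<Rightarrow> bool) \<Rightarrow> bool" where
  "well_bicovered V E \<longleftrightarrow> (\<forall>S. maximal_bipartite_set V E S \<longrightarrow> card S = bnum V E)"

definition join_V :: "'a set \<Rightarrow> 'b set \<Rightarrow> ('a + 'b) set" where
  "join_V V1 V2 = V1 <+> V2"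

definition join_E :: "'a set \<Rightarrow> ('a \<Rightarrow> 'a \<Rightarrow> bool) \<Rightarrow> 'b set \<Rightarrow> ('b \<Rightarrow> 'b \<Rightarrow> bool)
    \<Rightarrow> ('a + 'b) \<Rightarrow> ('a + 'b) \<Rightarrow> bool" where
  "join_E V1 E1 V2 E2 u v =
     (case (u, v) of
        (Inl x, Inl y) \<Rightarrow> E1 x y
      | (Inr x, Inr y) \<Rightarrow> E2 x y
      | (Inl x, Inr y) \<Rightarrow> x \<in> V1 \<and> y \<in> V2
      | (Inr x, Inl y) \<Rightarrow> y \<in> V1 \<and> x \<in> V2)"

end

theory Submission
  imports Defs
begin

(* A vertex of H together with an edge of G spans a triangle in the join, so an induced bipartite
   subgraph of the join either lies inside G or inside H, or meets both in independent sets. As G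
   and H have edges, the maximal ones are therefore exactly the maximal bipartite sets of G, those
   of H, and the unions of a maximal independent set of G with one of H. The join is thus
   well-bicovered iff all these have one common size c; then alpha(G) + alpha(H) = c, and
   b <= 2 alpha on either side forces alpha(G) = alpha(H) = c/2. *)

lemma independent_subset: "independent V E S \<Longrightarrow> T \<subseteq> S \<Longrightarrow> independent V E T"
  unfolding independent_def by blast

lemma independent_iff_subset_vertices:
  "P \<subseteq> V \<Longrightarrow> independent P E S \<longleftrightarrow> S \<subseteq> P \<and> independent V E S"
  unfolding independent_def by blast

lemma independent_singleton: "x \<in> V \<Longrightarrow> \<not> E x x \<Longrightarrow> independent V E {x}"
  unfolding independent_def by blast

lemma bipartite_set_subset: "bipartite_set V E S \<Longrightarrow> T \<subseteq> S \<Longrightarrow> bipartite_set V E T"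
  unfolding bipartite_set_def
proof (elim conjE exE, intro conjI exI)
  fix A B assume "T \<subseteq> S" "A \<union> B = S" "independent V E A" "independent V E B"
  then show "independent V E (A \<inter> T)" "independent V E (B \<inter> T)"
    by (auto intro: independent_subset)
qed auto

lemma bipartite_set_iff_subset_vertices:
  "P \<subseteq> V \<Longrightarrow> bipartite_set P E S \<longleftrightarrow> S \<subseteq> P \<and> bipartite_set V E S"
  unfolding bipartite_set_def by (metis independent_iff_subset_vertices le_sup_iff subset_trans)

lemma bipartite_set_Un:
  assumes "independent V E A" "independent V E B"
  shows "bipartite_set V E (A \<union> B)"
  unfolding bipartite_set_def
proof (intro conjI exI)
  show "independent V E (B - A)" using assms(2) by (rule independent_subset) blast
qed (use assms in \<open>auto simp: independent_def\<close>)

lemma bipartite_set_no_triangle: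
  assumes "bipartite_set V E S" "x \<in> S" "y \<in> S" "z \<in> S" "E x y" "E y z" "E x z"
  shows False
  using assms unfolding bipartite_set_def independent_def by blast

lemma finite_Collect_of_subsets: "finite V \<Longrightarrow> (\<And>S. X S \<Longrightarrow> S \<subseteq> V) \<Longrightarrow> finite (Collect X)"
  using finite_subset[of "Collect X" "Pow V"] by blast

lemma card_le_Max_card:
  assumes "finite V" "\<And>S. X S \<Longrightarrow> S \<subseteq> V" "X S"
  shows "card S \<le> Max (card ` Collect X)"
  using finite_Collect_of_subsets[OF assms(1,2)] assms(3) by simp

lemma maximal_set_of_Max_card:
  assumes "finite V" "\<And>S. X S \<Longrightarrow> S \<subseteq> V" "X {}"
  shows "\<exists>S. (X S \<and> (\<forall>T. X T \<and> S \<subseteq> T \<longrightarrow> T = S)) \<and> card S = Max (card ` Collect X)"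
proof -
  have "Max (card ` Collect X) \<in> card ` Collect X" using finite_Collect_of_subsets[OF assms(1,2)] assms(3) by (intro Max_in) auto
  then obtain S where S: "X S" "card S = Max (card ` Collect X)" by auto
  have "T = S" if "X T" "S \<subseteq> T" for T
  proof -
    have "finite T" using assms(1,2) that(1) by (meson finite_subset)
    moreover have "card T \<le> card S" using S card_le_Max_card[of V X T, OF assms(1,2) that(1)] by simp
    ultimately show ?thesis using that(2) card_seteq by metis
  qed
  then show ?thesis using S by blast
qed

lemma card_le_alpha: "finite V \<Longrightarrow> independent V E S \<Longrightarrow> card S \<le> alpha V E"
  unfolding alpha_def by (rule card_le_Max_card) (auto simp: independent_def)

lemma maximal_independent_card_alpha:
  "finite V \<Longrightarrow> \<exists>S. maximal_independent V E S \<and> card S = alpha V E"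
  unfolding alpha_def maximal_independent_def
  by (rule maximal_set_of_Max_card) (auto simp: independent_def)

lemma maximal_bipartite_set_card_bnum:
  "finite V \<Longrightarrow> \<exists>S. maximal_bipartite_set V E S \<and> card S = bnum V E"
  unfolding bnum_def maximal_bipartite_set_def
  by (rule maximal_set_of_Max_card) (auto simp: bipartite_set_def independent_def)

lemma well_covered_if_constant_card:
  assumes "finite V" "\<And>S. maximal_independent V E S \<Longrightarrow> card S = c"
  shows "well_covered V E \<and> alpha V E = c"
  using maximal_independent_card_alpha[OF assms(1)] assms(2) unfolding well_covered_def by metis

lemma well_bicovered_if_constant_card:
  assumes "finite V" "\<And>S. maximal_bipartite_set V E S \<Longrightarrow> card S = c"
  shows "well_bicovered V E \<and> bnum V E = c"
  using maximal_bipartite_set_card_bnum[OF assms(1)] assms(2) unfolding well_bicovered_def by metis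

lemma bnum_le_twice_alpha:
  assumes "finite V"
  shows "bnum V E \<le> 2 * alpha V E"
proof -
  obtain S where S: "bipartite_set V E S" "card S = bnum V E"
    using maximal_bipartite_set_card_bnum[OF assms] unfolding maximal_bipartite_set_def by blast
  then obtain A B where AB: "S = A \<union> B" "independent V E A" "independent V E B"
    unfolding bipartite_set_def by blast
  have "card S \<le> card A + card B" using AB(1) by (simp add: card_Un_le)
  also have "\<dots> \<le> 2 * alpha V E" using card_le_alpha[OF assms] AB(2,3) by (simp add: add_mono mult_2)
  finally show ?thesis using S(2) by simp
qed

lemma maximal_bipartite_set_not_independent:
  assumes "maximal_bipartite_set V E S" "E x y" "x \<in> V" "y \<in> V" "irreflp E"
  shows "\<not> independent V E S"
proof
  assume indep: "independent V E S"
  have "v \<in> S" if "v \<in> V" for v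
  proof -
    have "bipartite_set V E (S \<union> {v})"
      using indep independent_singleton[OF that irreflpD[OF assms(5)]] by (rule bipartite_set_Un)
    then show ?thesis using assms(1) unfolding maximal_bipartite_set_def by blast
  qed
  then show False using indep assms(2-4) unfolding independent_def by blast
qed

lemma maximal_independent_nonempty:
  assumes "maximal_independent V E S" "x \<in> V" "\<not> E x x"
  shows "S \<noteq> {}"
  using assms independent_singleton[of x V E] unfolding maximal_independent_def by blast

locale induced_embedding =
  fixes f :: "'a \<Rightarrow> 'b" and E :: "'a \<Rightarrow> 'a \<Rightarrow> bool" and E' :: "'b \<Rightarrow> 'b \<Rightarrow> bool"
  assumes inj: "inj f" and adjacent_iff: "E' (f x) (f y) \<longleftrightarrow> E x y"
begin

lemma card_image_eq: "card (f ` S) = card S"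
  using inj by (simp add: card_image inj_on_subset)

lemma independent_image_iff: "independent (f ` V) E' (f ` S) \<longleftrightarrow> independent V E S"
  unfolding independent_def using inj by (auto simp: adjacent_iff inj_image_subset_iff)

lemma bipartite_set_image_iff: "bipartite_set (f ` V) E' (f ` S) \<longleftrightarrow> bipartite_set V E S"
proof
  assume "bipartite_set (f ` V) E' (f ` S)"
  then obtain A B where AB: "A \<union> B = f ` S" "A \<inter> B = {}"
    "independent (f ` V) E' A" "independent (f ` V) E' B" "f ` S \<subseteq> f ` V"
    unfolding bipartite_set_def by blast
  have "A = f ` (f -` A)" "B = f ` (f -` B)" using AB(1) by auto
  then have "independent V E (f -` A)" "independent V E (f -` B)"
    using AB(3,4) independent_image_iff by metis+
  moreover have "f -` A \<union> f -` B = S" "f -` A \<inter> f -` B = {}"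
    using AB(1,2) inj by (auto simp flip: vimage_Un vimage_Int simp: inj_vimage_image_eq)
  ultimately show "bipartite_set V E S"
    unfolding bipartite_set_def using AB(5) inj by (auto simp: inj_image_subset_iff)
next
  assume "bipartite_set V E S"
  then obtain A B where "A \<union> B = S" "A \<inter> B = {}" "independent V E A" "independent V E B" "S \<subseteq> V"
    unfolding bipartite_set_def by blast
  then show "bipartite_set (f ` V) E' (f ` S)"
    unfolding bipartite_set_def using inj
    by (intro conjI exI[of _ "f ` A"] exI[of _ "f ` B"])
      (auto simp: independent_image_iff image_Int[symmetric])
qed

context
  fixes X :: "'a set \<Rightarrow> bool" and Y :: "'b set \<Rightarrow> bool"
  assumes Y_image_iff: "\<And>S. Y (f ` S) \<longleftrightarrow> X S"
    and Y_in_range: "\<And>T. Y T \<Longrightarrow> T \<subseteq> range f"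
begin

lemma Collect_image_eq: "Collect Y = image f ` Collect X"
proof (intro set_eqI iffI)
  fix T assume "T \<in> Collect Y"
  moreover have "T = f ` (f -` T)" using Y_in_range calculation by auto
  ultimately show "T \<in> image f ` Collect X" using Y_image_iff by (metis image_eqI mem_Collect_eq)
qed (auto simp: Y_image_iff)

lemma card_image_Collect_eq: "card ` Collect Y = card ` Collect X"
  unfolding Collect_image_eq image_image by (simp add: card_image_eq)

lemma all_image_iff: "(\<forall>T. Y T \<longrightarrow> P T) \<longleftrightarrow> (\<forall>S. X S \<longrightarrow> P (f ` S))"
proof -
  have "Y T \<longleftrightarrow> (\<exists>S. X S \<and> T = f ` S)" for T
    using Collect_image_eq by (simp add: set_eq_iff image_iff)
  then show ?thesis by auto
qed

lemma maximal_image_iff: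
  "(Y (f ` S) \<and> (\<forall>T. Y T \<and> f ` S \<subseteq> T \<longrightarrow> T = f ` S))
     \<longleftrightarrow> (X S \<and> (\<forall>T. X T \<and> S \<subseteq> T \<longrightarrow> T = S))"
  using all_image_iff[of "\<lambda>T. f ` S \<subseteq> T \<longrightarrow> T = f ` S"] inj
  by (simp add: Y_image_iff inj_image_subset_iff inj_image_eq_iff) blast

end

lemma independent_in_range: "independent (f ` V) E' T \<Longrightarrow> T \<subseteq> range f"
  unfolding independent_def by blast

lemma bipartite_set_in_range: "bipartite_set (f ` V) E' T \<Longrightarrow> T \<subseteq> range f"
  unfolding bipartite_set_def by blast

lemma maximal_independent_image_iff:
  "maximal_independent (f ` V) E' (f ` S) \<longleftrightarrow> maximal_independent V E S"
  unfolding maximal_independent_def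
  by (rule maximal_image_iff[where X = "independent V E" and Y = "independent (f ` V) E'"])
    (auto simp: independent_image_iff independent_in_range)

lemma maximal_bipartite_set_image_iff:
  "maximal_bipartite_set (f ` V) E' (f ` S) \<longleftrightarrow> maximal_bipartite_set V E S"
  unfolding maximal_bipartite_set_def
  by (rule maximal_image_iff[where X = "bipartite_set V E" and Y = "bipartite_set (f ` V) E'"])
    (auto simp: bipartite_set_image_iff bipartite_set_in_range)

lemma alpha_image: "alpha (f ` V) E' = alpha V E"
  unfolding alpha_def
  by (subst card_image_Collect_eq[where X = "independent V E" and Y = "independent (f ` V) E'"])
    (auto simp: independent_image_iff independent_in_range)

lemma bnum_image: "bnum (f ` V) E' = bnum V E"
  unfolding bnum_def
  by (subst card_image_Collect_eq[where X = "bipartite_set V E" and Y = "bipartite_set (f ` V) E'"])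
    (auto simp: bipartite_set_image_iff bipartite_set_in_range)

lemma well_covered_image_iff: "well_covered (f ` V) E' \<longleftrightarrow> well_covered V E"
proof -
  have "T \<subseteq> range f" if "maximal_independent (f ` V) E' T" for T
    using that independent_in_range unfolding maximal_independent_def by blast
  then show ?thesis
    unfolding well_covered_def alpha_image
    by (simp add: maximal_independent_image_iff card_image_eq
        all_image_iff[where X = "maximal_independent V E" and Y = "maximal_independent (f ` V) E'"])
qed

lemma well_bicovered_image_iff: "well_bicovered (f ` V) E' \<longleftrightarrow> well_bicovered V E"
proof -
  have "T \<subseteq> range f" if "maximal_bipartite_set (f ` V) E' T" for T
    using that bipartite_set_in_range unfolding maximal_bipartite_set_def by blast
  then show ?thesis
    unfolding well_bicovered_def bnum_image
    by (simp add: maximal_bipartite_set_image_iff card_image_eq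
        all_image_iff[where X = "maximal_bipartite_set V E"
          and Y = "maximal_bipartite_set (f ` V) E'"])
qed

end

(* The join, seen from inside: its vertex set splits into P and Q, with all edges between them. *)
definition all_edges_between :: "('a \<Rightarrow> 'a \<Rightarrow> bool) \<Rightarrow> 'a set \<Rightarrow> 'a set \<Rightarrow> bool" where
  "all_edges_between E P Q \<longleftrightarrow> (\<forall>x\<in>P. \<forall>y\<in>Q. E x y \<and> E y x)"

lemma all_edges_between_sym: "all_edges_between E P Q \<Longrightarrow> all_edges_between E Q P"
  unfolding all_edges_between_def by blast

lemma all_edges_between_disjoint: "irreflp E \<Longrightarrow> all_edges_between E P Q \<Longrightarrow> P \<inter> Q = {}"
  unfolding all_edges_between_def by (auto dest: irreflpD)

lemma maximal_bipartite_set_restrict: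
  assumes "P \<subseteq> V" "maximal_bipartite_set V E S" "S \<subseteq> P"
  shows "maximal_bipartite_set P E S"
  using assms unfolding maximal_bipartite_set_def by (auto simp: bipartite_set_iff_subset_vertices)

lemma independent_side_of_bipartite_join:
  assumes "bipartite_set V E S" "all_edges_between E P Q" "y \<in> S \<inter> Q"
  shows "independent P E (S \<inter> P)"
  unfolding independent_def
proof (intro conjI ballI notI)
  fix x x' assume "x \<in> S \<inter> P" "x' \<in> S \<inter> P" "E x x'"
  then show False
    using bipartite_set_no_triangle[OF assms(1), of x x' y] assms(2,3)
    unfolding all_edges_between_def by blast
qed blast

lemma maximal_bipartite_set_join_of_side:
  assumes "all_edges_between E P Q" "irreflp E" "maximal_bipartite_set P E S"
    "E x y" "x \<in> P" "y \<in> P"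
  shows "maximal_bipartite_set (P \<union> Q) E S"
  unfolding maximal_bipartite_set_def
proof (intro conjI allI impI)
  have bip: "bipartite_set P E S" using assms(3) unfolding maximal_bipartite_set_def by blast
  then show "bipartite_set (P \<union> Q) E S"
    using bipartite_set_iff_subset_vertices[of P "P \<union> Q"] by blast
  fix T assume T: "bipartite_set (P \<union> Q) E T \<and> S \<subseteq> T"
  have "bipartite_set (P \<union> Q) E (T \<inter> P)" using T bipartite_set_subset[of "P \<union> Q" E T] by blast
  then have "bipartite_set P E (T \<inter> P)"
    using bipartite_set_iff_subset_vertices[of P "P \<union> Q"] by blast
  moreover have "S \<subseteq> T \<inter> P" using T bip unfolding bipartite_set_def by blast
  ultimately have TP: "T \<inter> P = S" using assms(3) unfolding maximal_bipartite_set_def by blast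
  have "T \<inter> Q = {}"
  proof (rule ccontr)
    assume "T \<inter> Q \<noteq> {}"
    then obtain q where "q \<in> T \<inter> Q" by blast
    then have "independent P E S"
      using independent_side_of_bipartite_join[OF _ assms(1), of "P \<union> Q" T q] T TP by simp
    then show False using maximal_bipartite_set_not_independent[OF assms(3-6,2)] by blast
  qed
  moreover have "T \<subseteq> P \<union> Q" using T unfolding bipartite_set_def by blast
  ultimately show "T = S" using TP by blast
qed

lemma maximal_bipartite_set_join_of_independents:
  assumes "all_edges_between E P Q" "irreflp E" "P \<noteq> {}" "Q \<noteq> {}"
    "maximal_independent P E I" "maximal_independent Q E J"
  shows "maximal_bipartite_set (P \<union> Q) E (I \<union> J)"
  unfolding maximal_bipartite_set_def
proof (intro conjI allI impI)
  have I: "independent P E I" and J: "independent Q E J"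
    using assms(5,6) unfolding maximal_independent_def by blast+
  then show "bipartite_set (P \<union> Q) E (I \<union> J)"
    using independent_iff_subset_vertices[of _ "P \<union> Q"] by (intro bipartite_set_Un) blast+
  fix T assume T: "bipartite_set (P \<union> Q) E T \<and> I \<union> J \<subseteq> T"
  obtain p q where "p \<in> P" "q \<in> Q" using assms(3,4) by blast
  then have "I \<noteq> {}" "J \<noteq> {}"
    using maximal_independent_nonempty assms(5,6) irreflpD[OF assms(2)] by metis+
  then obtain x y where xy: "x \<in> I" "y \<in> J" by blast
  have "I \<subseteq> P" "J \<subseteq> Q" using I J unfolding independent_def by blast+
  have "independent P E (T \<inter> P)"
    using independent_side_of_bipartite_join[OF _ assms(1), of "P \<union> Q" T y] T xy \<open>J \<subseteq> Q\<close>
    by blast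
  moreover have "independent Q E (T \<inter> Q)"
    using independent_side_of_bipartite_join[OF _ all_edges_between_sym[OF assms(1)], of "P \<union> Q" T x]
      T xy \<open>I \<subseteq> P\<close>
    by blast
  moreover have "I \<subseteq> T \<inter> P" "J \<subseteq> T \<inter> Q" using T \<open>I \<subseteq> P\<close> \<open>J \<subseteq> Q\<close> by blast+
  ultimately have "T \<inter> P = I" "T \<inter> Q = J"
    using assms(5,6) unfolding maximal_independent_def by blast+
  moreover have "T \<subseteq> P \<union> Q" using T unfolding bipartite_set_def by blast
  ultimately show "T = I \<union> J" by blast
qed

lemma maximal_independent_side_of_maximal_bipartite_join:
  assumes "all_edges_between E P Q" "maximal_bipartite_set (P \<union> Q) E S"
    "S \<inter> P \<noteq> {}" "S \<inter> Q \<noteq> {}"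
  shows "maximal_independent P E (S \<inter> P)"
  unfolding maximal_independent_def
proof (intro conjI allI impI)
  have bip: "bipartite_set (P \<union> Q) E S"
    and max: "\<And>T. bipartite_set (P \<union> Q) E T \<Longrightarrow> S \<subseteq> T \<Longrightarrow> T = S"
    using assms(2) unfolding maximal_bipartite_set_def by blast+
  show "independent P E (S \<inter> P)"
    using independent_side_of_bipartite_join[OF bip assms(1)] assms(4) by blast
  have SQ: "independent Q E (S \<inter> Q)"
    using independent_side_of_bipartite_join[OF bip all_edges_between_sym[OF assms(1)]] assms(3)
    by blast
  fix T assume T: "independent P E T \<and> S \<inter> P \<subseteq> T"
  have "bipartite_set (P \<union> Q) E (T \<union> (S \<inter> Q))"
    using T SQ independent_iff_subset_vertices[of _ "P \<union> Q"] by (intro bipartite_set_Un) blast+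
  moreover have "S \<subseteq> T \<union> (S \<inter> Q)" using T bip unfolding bipartite_set_def by blast
  ultimately have "T \<union> (S \<inter> Q) = S" by (rule max)
  moreover have "T \<subseteq> P" using T unfolding independent_def by blast
  ultimately show "T = S \<inter> P" using T by blast
qed

lemma maximal_bipartite_set_join_cases:
  assumes "all_edges_between E P Q" "maximal_bipartite_set (P \<union> Q) E S"
  obtains "maximal_bipartite_set P E S"
  | "maximal_bipartite_set Q E S"
  | "maximal_independent P E (S \<inter> P)" "maximal_independent Q E (S \<inter> Q)"
proof -
  have "S \<subseteq> P \<union> Q" using assms(2) unfolding maximal_bipartite_set_def bipartite_set_def by blast
  consider "S \<inter> Q = {}" | "S \<inter> P = {}" | "S \<inter> P \<noteq> {}" "S \<inter> Q \<noteq> {}" by blast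
  then show thesis
  proof cases
    case 1
    then have "S \<subseteq> P" using \<open>S \<subseteq> P \<union> Q\<close> by blast
    then show thesis using that(1) maximal_bipartite_set_restrict[OF Un_upper1 assms(2)] by blast
  next
    case 2
    then have "S \<subseteq> Q" using \<open>S \<subseteq> P \<union> Q\<close> by blast
    then show thesis using that(2) maximal_bipartite_set_restrict[OF Un_upper2 assms(2)] by blast
  next
    case 3
    have "maximal_bipartite_set (Q \<union> P) E S" using assms(2) by (simp add: Un_commute)
    then have "maximal_independent Q E (S \<inter> Q)"
      using maximal_independent_side_of_maximal_bipartite_join[OF all_edges_between_sym[OF assms(1)]] 3
      by blast
    moreover have "maximal_independent P E (S \<inter> P)"
      using maximal_independent_side_of_maximal_bipartite_join[OF assms] 3 by blast
    ultimately show thesis using that(3) by blast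
  qed
qed

lemma card_Un_of_sides:
  assumes "finite P" "finite Q" "P \<inter> Q = {}" "I \<subseteq> P" "J \<subseteq> Q"
  shows "card (I \<union> J) = card I + card J"
  using assms by (meson card_Un_disjoint disjoint_iff finite_subset subsetD)

lemma well_bicovered_joinD:
  assumes fin: "finite P" "finite Q" and loopless: "irreflp E" and join: "all_edges_between E P Q"
    and edge_P: "\<exists>x\<in>P. \<exists>y\<in>P. E x y" and edge_Q: "\<exists>x\<in>Q. \<exists>y\<in>Q. E x y"
    and wb: "well_bicovered (P \<union> Q) E"
  shows "well_covered P E \<and> well_bicovered P E \<and> well_covered Q E \<and> well_bicovered Q E \<and>
    bnum P E = bnum Q E \<and> bnum Q E = 2 * alpha P E \<and> alpha P E = alpha Q E"
proof -
  define c where "c = bnum (P \<union> Q) E"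
  have card_c: "card S = c" if "maximal_bipartite_set (P \<union> Q) E S" for S
    using wb that unfolding well_bicovered_def c_def by blast
  have P: "well_bicovered P E \<and> bnum P E = c"
    using fin(1) card_c maximal_bipartite_set_join_of_side[OF join loopless] edge_P
    by (metis well_bicovered_if_constant_card)
  have Q: "well_bicovered Q E \<and> bnum Q E = c"
    using fin(2) card_c edge_Q
      maximal_bipartite_set_join_of_side[OF all_edges_between_sym[OF join] loopless]
    by (metis well_bicovered_if_constant_card Un_commute)
  have sum_c: "card I + card J = c" if "maximal_independent P E I" "maximal_independent Q E J" for I J
  proof -
    have "I \<subseteq> P" "J \<subseteq> Q" using that unfolding maximal_independent_def independent_def by blast+
    then have "card (I \<union> J) = card I + card J"
      using card_Un_of_sides fin all_edges_between_disjoint[OF loopless join] by blast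
    moreover have "P \<noteq> {}" "Q \<noteq> {}" using edge_P edge_Q by blast+
    ultimately show ?thesis
      using card_c maximal_bipartite_set_join_of_independents[OF join loopless _ _ that] by simp
  qed
  obtain I J where I: "maximal_independent P E I" "card I = alpha P E"
    and J: "maximal_independent Q E J" "card J = alpha Q E"
    using maximal_independent_card_alpha fin by metis
  have sum_alpha: "alpha P E + alpha Q E = c" using sum_c[OF I(1) J(1)] I(2) J(2) by simp
  have "well_covered P E"
  proof (rule well_covered_if_constant_card[OF fin(1), THEN conjunct1])
    fix I' assume "maximal_independent P E I'"
    then show "card I' = c - alpha Q E" using sum_c[of I' J] J by linarith
  qed
  moreover have "well_covered Q E"
  proof (rule well_covered_if_constant_card[OF fin(2), THEN conjunct1])
    fix J' assume "maximal_independent Q E J'"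
    then show "card J' = c - alpha P E" using sum_c[of I J'] I by linarith
  qed
  moreover have "alpha P E = alpha Q E"
    using bnum_le_twice_alpha[OF fin(1), of E] bnum_le_twice_alpha[OF fin(2), of E] P Q sum_alpha
    by linarith
  ultimately show ?thesis using P Q sum_alpha by simp
qed

lemma well_bicovered_joinI:
  assumes fin: "finite P" "finite Q" and loopless: "irreflp E" and join: "all_edges_between E P Q"
    and wc: "well_covered P E" "well_covered Q E" and wb: "well_bicovered P E" "well_bicovered Q E"
    and b_eq: "bnum Q E = bnum P E" and b_alpha: "bnum P E = alpha P E + alpha Q E"
  shows "well_bicovered (P \<union> Q) E"
proof -
  have "card S = bnum P E" if S: "maximal_bipartite_set (P \<union> Q) E S" for S
    using join S
  proof (cases rule: maximal_bipartite_set_join_cases)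
    case 1
    then show ?thesis using wb(1) unfolding well_bicovered_def by blast
  next
    case 2
    then show ?thesis using wb(2) b_eq unfolding well_bicovered_def by metis
  next
    case 3
    have "S = (S \<inter> P) \<union> (S \<inter> Q)"
      using S unfolding maximal_bipartite_set_def bipartite_set_def by blast
    then have "card S = card (S \<inter> P) + card (S \<inter> Q)"
      using card_Un_of_sides fin all_edges_between_disjoint[OF loopless join] by (metis Int_lower2)
    also have "\<dots> = alpha P E + alpha Q E" using 3 wc unfolding well_covered_def by simp
    finally show ?thesis using b_alpha by simp
  qed
  then show ?thesis using fin by (intro well_bicovered_if_constant_card[THEN conjunct1]) auto
qed

theorem well_bicovered_join_iff:
  assumes "finite P" "finite Q" "irreflp E" "all_edges_between E P Q"
    "\<exists>x\<in>P. \<exists>y\<in>P. E x y" "\<exists>x\<in>Q. \<exists>y\<in>Q. E x y"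
  shows "well_bicovered (P \<union> Q) E \<longleftrightarrow>
    well_covered P E \<and> well_bicovered P E \<and> well_covered Q E \<and> well_bicovered Q E \<and>
    bnum P E = bnum Q E \<and> bnum Q E = 2 * alpha P E \<and> alpha P E = alpha Q E"
  using well_bicovered_joinD[OF assms] well_bicovered_joinI[OF assms(1-4)] by auto

lemma join_E_Inl [simp]: "join_E V1 E1 V2 E2 (Inl x) (Inl y) \<longleftrightarrow> E1 x y"
  unfolding join_E_def by simp

lemma join_E_Inr [simp]: "join_E V1 E1 V2 E2 (Inr u) (Inr v) \<longleftrightarrow> E2 u v"
  unfolding join_E_def by simp

lemma join_V_eq: "join_V V1 V2 = Inl ` V1 \<union> Inr ` V2"
  unfolding join_V_def Plus_def ..

lemma irreflp_join_E:
  assumes "irreflp E1" "irreflp E2"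
  shows "irreflp (join_E V1 E1 V2 E2)"
proof (rule irreflpI)
  fix u show "\<not> join_E V1 E1 V2 E2 u u" using assms by (cases u) (simp_all add: irreflpD)
qed

lemma all_edges_between_join_E: "all_edges_between (join_E V1 E1 V2 E2) (Inl ` V1) (Inr ` V2)"
  unfolding all_edges_between_def join_E_def by auto

lemma graph_irreflp: "graph V E \<Longrightarrow> irreflp E"
  unfolding graph_def by (blast intro: irreflpI)

lemma graph_has_edge_in: "graph V E \<Longrightarrow> has_edge E \<Longrightarrow> \<exists>x\<in>V. \<exists>y\<in>V. E x y"
  unfolding graph_def has_edge_def by blast

theorem mainTheorem2:
  fixes V1 :: "'a set" and E1 :: "'a \<Rightarrow> 'a \<Rightarrow> bool"
    and V2 :: "'b set" and E2 :: "'b \<Rightarrow> 'b \<Rightarrow> bool"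
  assumes "graph V1 E1" and "graph V2 E2"
    and "has_edge E1" and "has_edge E2"
  shows "well_bicovered (join_V V1 V2) (join_E V1 E1 V2 E2) \<longleftrightarrow>
           (well_covered V1 E1 \<and> well_bicovered V1 E1 \<and>
            well_covered V2 E2 \<and> well_bicovered V2 E2 \<and>
            bnum V1 E1 = bnum V2 E2 \<and>
            bnum V2 E2 = 2 * alpha V1 E1 \<and>
            2 * alpha V1 E1 = 2 * alpha V2 E2)"
proof -
  let ?E = "join_E V1 E1 V2 E2"
  interpret left: induced_embedding Inl E1 ?E by unfold_locales simp_all
  interpret right: induced_embedding Inr E2 ?E by unfold_locales simp_all
  have "finite (Inl ` V1)" "finite (Inr ` V2)" using assms(1,2) unfolding graph_def by simp_all
  moreover have "irreflp ?E"
    using irreflp_join_E[OF graph_irreflp[OF assms(1)] graph_irreflp[OF assms(2)]] .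
  moreover have "\<exists>x\<in>Inl ` V1. \<exists>y\<in>Inl ` V1. ?E x y"
    using graph_has_edge_in[OF assms(1,3)] by auto
  moreover have "\<exists>x\<in>Inr ` V2. \<exists>y\<in>Inr ` V2. ?E x y"
    using graph_has_edge_in[OF assms(2,4)] by auto
  ultimately have "well_bicovered (join_V V1 V2) ?E \<longleftrightarrow>
    well_covered (Inl ` V1) ?E \<and> well_bicovered (Inl ` V1) ?E \<and>
    well_covered (Inr ` V2) ?E \<and> well_bicovered (Inr ` V2) ?E \<and>
    bnum (Inl ` V1) ?E = bnum (Inr ` V2) ?E \<and> bnum (Inr ` V2) ?E = 2 * alpha (Inl ` V1) ?E \<and>
    alpha (Inl ` V1) ?E = alpha (Inr ` V2) ?E"
    unfolding join_V_eq by (intro well_bicovered_join_iff all_edges_between_join_E)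
  then show ?thesis
    by (simp only: left.well_covered_image_iff left.well_bicovered_image_iff left.bnum_image
        left.alpha_image right.well_covered_image_iff right.well_bicovered_image_iff
        right.bnum_image right.alpha_image) simp
qed

end
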